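(* Let $A_i\in\mathbb R^{d\times d}$, $i\in\mathbb N$, be matrices such that $\|A_i\|\le A^*<\infty$ for all $i$, $\sup_{i\in\mathbb N}\rho(A_i)=\rho_0<1$, and for some $p\ge1$ $$\|A\|_{p\text{-var}}=\Big(\sup_{1\le i_1<i_2<\cdots}\sum_{k=1}^\infty\|A_{i_{k+1}}-A_{i_k}\|^p\Big)^{1/p}\le A^*.$$ Then for every $\rho>\rho_0$ there exists $K=K(\rho,\rho_0,A^* )$ such that $\big\|\prod_{i=s+1}^tA_i\big\|\le K\rho^{t-s}$ for all integers $0\le s<t$.
   Context: $\|\cdot\|$ denotes the Euclidean operator norm and $\rho(A)$ the spectral radius (maximal modulus of the complex eigenvalues) of a matrix $A$. *)

theory Defs
  imports "HOL-Analysis.Analysis"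
begin

definition mnorm :: "real^'n^'n \<Rightarrow> real" where
  "mnorm A = onorm (\<lambda>x. A *v x)"

definition cmat :: "real^'n^'n \<Rightarrow> complex^'n^'n" where
  "cmat A = (\<chi> i j. complex_of_real (A $ i $ j))"

definition ceigenvalues :: "real^'n^'n \<Rightarrow> complex set" where
  "ceigenvalues A = {z. \<exists>v. v \<noteq> 0 \<and> cmat A *v v = z *s v}"

definition spec_rad :: "real^'n^'n \<Rightarrow> real" where
  "spec_rad A = Max (cmod ` ceigenvalues A)"

text \<open>Ordered product A_t ... A_{s+1} (here with t = s + k).\<close>
fun mprod :: "(nat \<Rightarrow> real^'n^'n) \<Rightarrow> nat \<Rightarrow> nat \<Rightarrow> real^'n^'n" where
  "mprod A s 0 = mat 1"
| "mprod A s (Suc k) = A (s + Suc k) ** mprod A s k"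

definition pvar :: "real \<Rightarrow> (nat \<Rightarrow> real^'n^'n) \<Rightarrow> ereal" where
  "pvar p A = (let S = (SUP \<iota>\<in>{\<iota>. strict_mono \<iota> \<and> \<iota> 0 \<ge> 1}.
       (\<Sum>k. ennreal (mnorm (A (\<iota> (Suc k)) - A (\<iota> k)) powr p)))
     in if S = \<infinity> then \<infinity> else ereal (enn2real S powr (1/p)))"

end

(*
  A single matrix B with norm at most a and spectral radius at most r0 < r satisfies
  norm (B^m) <= C r^m with C depending only on a, r0, r and the dimension. Indeed, if
  e_1, ..., e_n are its eigenvalues, the partial products M_k = (B - e_1) ... (B - e_k)
  vanish for k = n (Schur triangularisation) and satisfy
  M_k B^(m+1) = M_(k+1) B^m + e_(k+1) M_k B^m, so a downward induction on k gives
  geometric bounds for M_k B^m; the case k = 0 is B^m itself.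

  If A_(s+1), ..., A_u all lie within eps of B = A_(s+1), a discrete Gronwall argument
  gives norm (A_u ... A_(s+1)) <= C (r + C eps)^(u-s) <= C rho^(u-s) for small eps.
  A p-variation at most A* leaves room for fewer than (A*/eps)^p + 1 jumps of size eps,
  so (s, t] splits into at most k + 1 such blocks, and the product is bounded by
  C^(k+1) rho^(t-s).
*)

theory Submission
  imports Defs "Jordan_Normal_Form.Spectral_Radius" "Jordan_Normal_Form.Jordan_Normal_Form_Uniqueness"
begin

no_notation Matrix.vec_index (infixl "$" 100)
hide_const (open) Matrix.mat

lemma mnorm_nonneg: "0 \<le> mnorm A"
  unfolding mnorm_def by (rule onorm_pos_le[OF matrix_vector_mul_bounded_linear])

lemma mnorm_mult_le: "mnorm (A ** B) \<le> mnorm A * mnorm (B :: real^'n^'n)"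
proof -
  have "(*v) (A ** B) = (*v) A \<circ> (*v) B"
    by (auto simp: matrix_vector_mul_assoc)
  then show ?thesis
    unfolding mnorm_def
    using onorm_compose[OF matrix_vector_mul_bounded_linear matrix_vector_mul_bounded_linear]
    by simp
qed

lemma mnorm_triangle: "mnorm (A + B) \<le> mnorm A + mnorm (B :: real^'n^'n)"
proof -
  have "(*v) (A + B) = (\<lambda>x. A *v x + B *v x)"
    by (auto simp: matrix_vector_mult_add_rdistrib)
  then show ?thesis
    unfolding mnorm_def
    using onorm_triangle[OF matrix_vector_mul_bounded_linear matrix_vector_mul_bounded_linear]
    by simp
qed

lemma mnorm_zero [simp]: "mnorm (0 :: real^'n^'n) = 0"
proof -
  have "(*v) (0 :: real^'n^'n) = (\<lambda>x. 0)"
    by (auto simp: matrix_vector_mult_def Finite_Cartesian_Product.vec_eq_iff)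
  then show ?thesis
    unfolding mnorm_def by (simp add: onorm_zero)
qed

lemma matrix_diff_ldistrib:
  fixes A :: "'a::ring_1^'n^'m" and B C :: "'a^'p^'n"
  shows "A ** (B - C) = A ** B - A ** C"
  by (metis add_diff_cancel diff_add_cancel matrix_add_ldistrib)

lemma matrix_diff_rdistrib:
  fixes A B :: "'a::ring_1^'n^'m" and C :: "'a^'p^'n"
  shows "(A - B) ** C = A ** C - B ** C"
  by (simp add: matrix_matrix_mult_def Finite_Cartesian_Product.vec_eq_iff
      left_diff_distrib sum_subtractf)

lemma mprod_add: "mprod A s (a + b) = mprod A (s + a) b ** mprod A s a"
  by (induction b) (simp_all add: matrix_mul_assoc add.assoc)

fun matpow :: "'a::semiring_1^'n^'n \<Rightarrow> nat \<Rightarrow> 'a^'n^'n" where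
  "matpow B 0 = mat 1"
| "matpow B (Suc m) = B ** matpow B m"

lemma matpow_Suc_right: "matpow B (Suc m) = matpow B m ** B"
  by (induction m) (simp_all add: matrix_mul_assoc)

lemma matpow_mult_split:
  fixes B :: "'a::ring_1^'n^'n"
  shows "matpow B q ** (X ** P) = matpow B (Suc q) ** P + matpow B q ** ((X - B) ** P)"
  by (simp del: matpow.simps
      add: matpow_Suc_right matrix_diff_rdistrib matrix_diff_ldistrib matrix_mul_assoc)

section \<open>Uniform power bounds from the factored characteristic polynomial\<close>

definition mat_l1_norm :: "'a::real_normed_field mat \<Rightarrow> real" where
  "mat_l1_norm X = (\<Sum>i=0..<dim_row X. \<Sum>j=0..<dim_col X. norm (X $$ (i,j)))"

lemma mat_l1_norm_nonneg: "0 \<le> mat_l1_norm X"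
  unfolding mat_l1_norm_def by (intro sum_nonneg) auto

lemma mat_l1_norm_zero [simp]: "mat_l1_norm (0\<^sub>m n m) = 0"
  unfolding mat_l1_norm_def by simp

lemma mat_l1_norm_one: "mat_l1_norm (1\<^sub>m n) = real n"
proof -
  have "mat_l1_norm (1\<^sub>m n) = (\<Sum>i=0..<n. \<Sum>j=0..<n. if i = j then 1 else 0)"
    unfolding mat_l1_norm_def by (intro sum.cong) auto
  then show ?thesis
    by simp
qed

lemma mat_l1_norm_smult: "mat_l1_norm (c \<cdot>\<^sub>m X) = norm c * mat_l1_norm X"
  unfolding mat_l1_norm_def by (simp add: norm_mult sum_distrib_left)

lemma mat_l1_norm_add:
  assumes "X \<in> carrier_mat n m" and "Y \<in> carrier_mat n m"
  shows "mat_l1_norm (X + Y) \<le> mat_l1_norm X + mat_l1_norm Y"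
proof -
  have "mat_l1_norm (X + Y) = (\<Sum>i=0..<n. \<Sum>j=0..<m. norm (X $$ (i,j) + Y $$ (i,j)))"
    using assms unfolding mat_l1_norm_def by (auto intro!: sum.cong)
  also have "\<dots> \<le> (\<Sum>i=0..<n. \<Sum>j=0..<m. norm (X $$ (i,j)) + norm (Y $$ (i,j)))"
    by (intro sum_mono norm_triangle_ineq)
  also have "\<dots> = mat_l1_norm X + mat_l1_norm Y"
    using assms unfolding mat_l1_norm_def by (simp add: sum.distrib)
  finally show ?thesis .
qed

lemma mat_l1_norm_mult:
  assumes X: "X \<in> carrier_mat n k" and Y: "Y \<in> carrier_mat k m"
  shows "mat_l1_norm (X * Y) \<le> mat_l1_norm X * mat_l1_norm Y"
proof -
  have row: "(\<Sum>j=0..<m. norm (Y $$ (l,j))) \<le> mat_l1_norm Y" if "l < k" for l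
  proof -
    have "(\<Sum>j=0..<m. norm (Y $$ (l,j))) \<le> (\<Sum>l'=0..<k. \<Sum>j=0..<m. norm (Y $$ (l',j)))"
      by (rule member_le_sum[where f = "\<lambda>l. \<Sum>j=0..<m. norm (Y $$ (l,j))"])
        (use that in \<open>auto intro: sum_nonneg\<close>)
    then show ?thesis
      using Y unfolding mat_l1_norm_def by simp
  qed
  have "mat_l1_norm (X * Y) = (\<Sum>i=0..<n. \<Sum>j=0..<m. norm (\<Sum>l=0..<k. X $$ (i,l) * Y $$ (l,j)))"
    using X Y unfolding mat_l1_norm_def by (auto simp: scalar_prod_def intro!: sum.cong)
  also have "\<dots> \<le> (\<Sum>i=0..<n. \<Sum>j=0..<m. \<Sum>l=0..<k. norm (X $$ (i,l)) * norm (Y $$ (l,j)))"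
    by (intro sum_mono order_trans[OF norm_sum]) (simp add: norm_mult)
  also have "\<dots> = (\<Sum>i=0..<n. \<Sum>l=0..<k. norm (X $$ (i,l)) * (\<Sum>j=0..<m. norm (Y $$ (l,j))))"
    by (simp add: sum.swap[of _ "{0..<m}"] sum_distrib_left)
  also have "\<dots> \<le> (\<Sum>i=0..<n. \<Sum>l=0..<k. norm (X $$ (i,l)) * mat_l1_norm Y)"
    by (intro sum_mono mult_left_mono row) auto
  also have "\<dots> = mat_l1_norm X * mat_l1_norm Y"
    using X unfolding mat_l1_norm_def by (simp add: sum_distrib_right)
  finally show ?thesis .
qed

lemma mat_l1_norm_char_matrix:
  assumes "X \<in> carrier_mat n n"
  shows "mat_l1_norm (char_matrix X e) \<le> mat_l1_norm X + real n * norm e"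
  using mat_l1_norm_add[OF assms, of "(-e) \<cdot>\<^sub>m 1\<^sub>m n"] assms
  by (simp add: char_matrix_def mat_l1_norm_smult mat_l1_norm_one mult.commute)

lemma similar_mat_wit_mult:
  assumes AB: "similar_mat_wit A B P Q" and AB': "similar_mat_wit A' B' P Q"
  shows "similar_mat_wit (A * A') (B * B') P Q"
proof -
  define n where "n = dim_row A"
  note wit = similar_mat_witD[OF n_def AB]
  note wit' = similar_mat_witD[OF refl AB']
  have dim: "dim_row A' = n"
    using carrier_matD(1)[OF wit(6)] carrier_matD(1)[OF wit'(6)] by simp
  from wit'(4) dim have A': "A' \<in> carrier_mat n n"
    by simp
  from wit'(5) dim have B': "B' \<in> carrier_mat n n"
    by simp
  have "A * A' = P * (B * (Q * P) * B') * Q"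
    unfolding wit(3) wit'(3) using wit(5-7) B'
    by (simp add: assoc_mult_mat[of _ n n _ n _ n])
  also have "B * (Q * P) = B"
    unfolding wit(2) using wit(5) by simp
  finally show ?thesis
    by (rule similar_mat_witI[OF wit(1,2) _ mult_carrier_mat[OF wit(4) A']
          mult_carrier_mat[OF wit(5) B'] wit(6,7)])
qed

(* For the eigenvalues es of X, listed with multiplicity, lin_factor_prod X es n is the
   characteristic polynomial evaluated at X; note char_matrix X e = X - e 1. *)
fun lin_factor_prod :: "'a::field mat \<Rightarrow> 'a list \<Rightarrow> nat \<Rightarrow> 'a mat" where
  "lin_factor_prod X es 0 = 1\<^sub>m (dim_row X)"
| "lin_factor_prod X es (Suc k) = lin_factor_prod X es k * char_matrix X (es ! k)"

lemma lin_factor_prod_carrier [simp]: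
  "X \<in> carrier_mat n n \<Longrightarrow> lin_factor_prod X es k \<in> carrier_mat n n"
  by (induction k) auto

lemma similar_mat_wit_lin_factor_prod:
  assumes "similar_mat_wit X T P Q"
  shows "similar_mat_wit (lin_factor_prod X es k) (lin_factor_prod T es k) P Q"
proof (induction k)
  case 0
  define n where "n = dim_row X"
  note wit = similar_mat_witD[OF n_def assms]
  have "similar_mat_wit (1\<^sub>m n) (1\<^sub>m n) P Q"
    by (rule similar_mat_witI[OF wit(1,2) _ one_carrier_mat one_carrier_mat wit(6,7)])
      (use wit(1,6) in simp)
  then show ?case
    unfolding lin_factor_prod.simps n_def[symmetric] carrier_matD(1)[OF wit(5)] .
next
  case (Suc k)
  then show ?case
    unfolding lin_factor_prod.simps
    by (rule similar_mat_wit_mult[OF _ similar_mat_wit_char_matrix[OF assms]])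
qed

lemma lin_factor_prod_upper_triangular:
  assumes T: "T \<in> carrier_mat n n" and ut: "upper_triangular T"
  shows "k \<le> n \<Longrightarrow> i < n \<Longrightarrow> j < k
    \<Longrightarrow> lin_factor_prod T (diag_mat T) k $$ (i,j) = 0"
proof (induction k arbitrary: i j)
  case 0
  then show ?case by simp
next
  case (Suc k)
  let ?M = "lin_factor_prod T (diag_mat T) k" and ?C = "char_matrix T (T $$ (k,k))"
  have "diag_mat T ! k = T $$ (k,k)"
    using Suc.prems T by (simp add: diag_mat_def)
  then have "lin_factor_prod T (diag_mat T) (Suc k) $$ (i,j) = (\<Sum>l=0..<n. ?M $$ (i,l) * ?C $$ (l,j))"
    using Suc.prems T carrier_matD[OF lin_factor_prod_carrier[OF T]]
      carrier_matD[OF char_matrix_closed[OF T]]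
    by (auto simp: scalar_prod_def intro!: sum.cong)
  also have "\<dots> = 0"
  proof (intro sum.neutral ballI)
    fix l
    assume l: "l \<in> {0..<n}"
    show "?M $$ (i,l) * ?C $$ (l,j) = 0"
    proof (cases "l < k")
      case True
      then show ?thesis
        using Suc.IH[of i l] Suc.prems by simp
    next
      case False
      have "?C $$ (l,j) = T $$ (l,j) - T $$ (k,k) * (if l = j then 1 else 0)"
        using l Suc.prems T by (simp add: char_matrix_def)
      also have "\<dots> = 0"
      proof (cases "j < l")
        case True
        then show ?thesis
          using l T ut unfolding upper_triangular_def by auto
      next
        case False
        then have "l = k" and "j = k"
          using \<open>\<not> l < k\<close> Suc.prems by auto
        then show ?thesis
          by simp
      qed
      finally show ?thesis
        by simp
    qed
  qed
  finally show ?case .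
qed

lemma cayley_hamilton_factored:
  assumes X: "(X :: complex mat) \<in> carrier_mat n n"
  obtains es where "length es = n" and "set es \<subseteq> spectrum X"
    and "lin_factor_prod X es n = 0\<^sub>m n n"
proof -
  obtain es where cp: "char_poly X = (\<Prod>a\<leftarrow>es. [:- a, 1:])" and len: "length es = n"
    using char_poly_factorized[OF X] by auto
  obtain T P Q where "schur_decomposition X es = (T, P, Q)"
    by (cases "schur_decomposition X es") auto
  from schur_decomposition[OF X cp this] have wit: "similar_mat_wit X T P Q"
    and ut: "upper_triangular T" and diag: "diag_mat T = es"
    by auto
  note wit_dims = similar_mat_witD2[OF X wit]
  have spec: "set es \<subseteq> spectrum X"
    using spectrum_root_char_poly[OF X] cp linear_poly_root by auto
  have "lin_factor_prod T es n = 0\<^sub>m n n"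
    using lin_factor_prod_upper_triangular[OF wit_dims(5) ut, of n]
      carrier_matD[OF lin_factor_prod_carrier[OF wit_dims(5)]]
    unfolding diag by (intro eq_matI) auto
  moreover have "lin_factor_prod X es n = P * lin_factor_prod T es n * Q"
    by (rule similar_mat_witD2(3)[OF lin_factor_prod_carrier[OF X] similar_mat_wit_lin_factor_prod[OF wit]])
  ultimately have "lin_factor_prod X es n = 0\<^sub>m n n"
    using wit_dims(6,7) by simp
  with len spec show ?thesis
    by (rule that)
qed

lemma mat_l1_norm_lin_factor_prod:
  assumes X: "X \<in> carrier_mat n n" and es: "\<forall>e\<in>set es. norm e \<le> r"
  shows "k \<le> length es
    \<Longrightarrow> mat_l1_norm (lin_factor_prod X es k) \<le> real n * (mat_l1_norm X + real n * r) ^ k"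
proof (induction k)
  case 0
  then show ?case
    using X by (simp add: mat_l1_norm_one)
next
  case (Suc k)
  have e: "norm (es ! k) \<le> r"
    using es Suc.prems by simp
  have "mat_l1_norm (lin_factor_prod X es (Suc k))
      \<le> mat_l1_norm (lin_factor_prod X es k) * mat_l1_norm (char_matrix X (es ! k))"
    using X by (simp add: mat_l1_norm_mult[of _ n n _ n])
  also have "\<dots> \<le> (real n * (mat_l1_norm X + real n * r) ^ k) * (mat_l1_norm X + real n * r)"
  proof (intro mult_mono mat_l1_norm_nonneg)
    show "mat_l1_norm (lin_factor_prod X es k) \<le> real n * (mat_l1_norm X + real n * r) ^ k"
      using Suc by simp
    show "mat_l1_norm (char_matrix X (es ! k)) \<le> mat_l1_norm X + real n * r"
      using mat_l1_norm_char_matrix[OF X, of "es ! k"] e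
      by (meson add_left_mono mult_left_mono of_nat_0_le_iff order_trans)
    have "0 \<le> r"
      using e norm_ge_zero order_trans by blast
    then show "0 \<le> real n * (mat_l1_norm X + real n * r) ^ k"
      using mat_l1_norm_nonneg[of X] by simp
  qed
  finally show ?case
    by (simp add: mult_ac)
qed

lemma pow_mat_Suc_left:
  assumes "X \<in> carrier_mat n n"
  shows "X ^\<^sub>m Suc m = X * X ^\<^sub>m m"
proof (induction m)
  case 0
  then show ?case using assms by simp
next
  case (Suc m)
  have "X ^\<^sub>m Suc (Suc m) = X * X ^\<^sub>m m * X"
    using Suc by simp
  also have "\<dots> = X * X ^\<^sub>m Suc m"
    using assms by (simp add: assoc_mult_mat[of _ n n _ n _ n])
  finally show ?case .
qed

lemma lin_factor_prod_mult_pow_Suc: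
  assumes X: "X \<in> carrier_mat n n"
  shows "lin_factor_prod X es k * X ^\<^sub>m Suc m
    = lin_factor_prod X es (Suc k) * X ^\<^sub>m m + (es ! k) \<cdot>\<^sub>m (lin_factor_prod X es k * X ^\<^sub>m m)"
proof -
  let ?M = "lin_factor_prod X es k" and ?W = "X ^\<^sub>m m" and ?e = "es ! k"
  let ?C = "char_matrix X ?e"
  have M: "?M \<in> carrier_mat n n" and W: "?W \<in> carrier_mat n n" and C: "?C \<in> carrier_mat n n"
    using X by simp_all
  have X_split: "X = ?C + ?e \<cdot>\<^sub>m 1\<^sub>m n"
    using X by (intro eq_matI) (auto simp: char_matrix_def)
  have "?M * X ^\<^sub>m Suc m = ?M * ((?C + ?e \<cdot>\<^sub>m 1\<^sub>m n) * ?W)"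
    unfolding pow_mat_Suc_left[OF X] by (subst X_split) (rule refl)
  also have "\<dots> = ?M * (?C * ?W + ?e \<cdot>\<^sub>m ?W)"
    using C W
    by (simp add: add_mult_distrib_mat[of _ n n] mult_smult_assoc_mat[of _ n n] left_mult_one_mat[OF W])
  also have "\<dots> = ?M * (?C * ?W) + ?M * (?e \<cdot>\<^sub>m ?W)"
    by (rule mult_add_distrib_mat[OF M mult_carrier_mat[OF C W] smult_carrier_mat[OF W]])
  also have "?M * (?C * ?W) = ?M * ?C * ?W"
    by (rule assoc_mult_mat[OF M C W, symmetric])
  also have "?M * (?e \<cdot>\<^sub>m ?W) = ?e \<cdot>\<^sub>m (?M * ?W)"
    by (rule mult_smult_distrib[OF M W])
  finally show ?thesis
    by simp
qed

lemma geometric_recurrence_le: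
  fixes x :: "nat \<Rightarrow> real"
  assumes r0: "0 \<le> r0" and r: "r0 < r" and c: "0 \<le> c" and E: "0 \<le> E" "x 0 \<le> E"
    and step: "\<And>m. x (Suc m) \<le> c * r ^ m + r0 * x m"
  shows "x m \<le> (E + c / (r - r0)) * r ^ m"
proof (induction m)
  case 0
  have "0 \<le> c / (r - r0)"
    using c r by simp
  then show ?case
    using E by simp
next
  case (Suc m)
  let ?K = "E + c / (r - r0)"
  have "(r - r0) * ?K = (r - r0) * E + c"
    using r by (simp add: field_simps)
  then have "c \<le> (r - r0) * ?K"
    using E r mult_nonneg_nonneg[of "r - r0" E] by linarith
  then have "c + r0 * ?K \<le> r * ?K"
    unfolding left_diff_distrib by linarith
  then have "(c + r0 * ?K) * r ^ m \<le> (r * ?K) * r ^ m"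
    using r0 r by (intro mult_right_mono) auto
  then have "c * r ^ m + r0 * (?K * r ^ m) \<le> ?K * r ^ Suc m"
    by (simp add: algebra_simps)
  moreover have "x (Suc m) \<le> c * r ^ m + r0 * (?K * r ^ m)"
    using step[of m] Suc r0 by (meson add_left_mono mult_left_mono order_trans)
  ultimately show ?case
    by linarith
qed

(* The constants produced by iterating geometric_recurrence_le downwards from
   lin_factor_prod X es n = 0. *)
fun decay_const :: "real \<Rightarrow> real \<Rightarrow> nat \<Rightarrow> real" where
  "decay_const E \<delta> 0 = 0"
| "decay_const E \<delta> (Suc j) = E + decay_const E \<delta> j / \<delta>"

lemma decay_const_nonneg: "0 \<le> E \<Longrightarrow> 0 < \<delta> \<Longrightarrow> 0 \<le> decay_const E \<delta> j"
  by (induction j) auto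

lemma mat_l1_norm_lin_factor_prod_mult_pow:
  assumes X: "X \<in> carrier_mat n n" and vanish: "lin_factor_prod X es n = 0\<^sub>m n n"
    and es: "\<forall>e\<in>set es. norm e \<le> r0" and len: "length es = n"
    and r0: "0 \<le> r0" and r: "r0 < r"
    and E: "\<forall>k\<le>n. mat_l1_norm (lin_factor_prod X es k) \<le> E"
  shows "j + k = n \<Longrightarrow>
    mat_l1_norm (lin_factor_prod X es k * X ^\<^sub>m m) \<le> decay_const E (r - r0) j * r ^ m"
proof (induction j arbitrary: k m)
  case 0
  then have "lin_factor_prod X es k * X ^\<^sub>m m = 0\<^sub>m n n"
    using vanish X by simp
  then show ?case
    by simp
next
  case (Suc j)
  have k: "k < n"
    using Suc.prems by simp
  have E_nonneg: "0 \<le> E"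
    using E mat_l1_norm_nonneg order_trans by blast
  have \<delta>: "0 < r - r0"
    using r by simp
  let ?M = "lin_factor_prod X es"
  show ?case
    unfolding decay_const.simps
  proof (rule geometric_recurrence_le[where x = "\<lambda>m. mat_l1_norm (?M k * X ^\<^sub>m m)",
        OF r0 r decay_const_nonneg[OF E_nonneg \<delta>] E_nonneg])
    show "mat_l1_norm (?M k * X ^\<^sub>m 0) \<le> E"
      using E k X by (simp add: right_mult_one_mat[OF lin_factor_prod_carrier[OF X]])
    fix m'
    have "mat_l1_norm (?M k * X ^\<^sub>m Suc m')
        \<le> mat_l1_norm (?M (Suc k) * X ^\<^sub>m m') + mat_l1_norm ((es ! k) \<cdot>\<^sub>m (?M k * X ^\<^sub>m m'))"
      unfolding lin_factor_prod_mult_pow_Suc[OF X]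
      by (intro mat_l1_norm_add[of _ n n] mult_carrier_mat[of _ n n] smult_carrier_mat
          lin_factor_prod_carrier pow_carrier_mat X)
    also have "\<dots> \<le> decay_const E (r - r0) j * r ^ m' + r0 * mat_l1_norm (?M k * X ^\<^sub>m m')"
      unfolding mat_l1_norm_smult using Suc.IH[of "Suc k" m'] Suc.prems es k len
      by (intro add_mono mult_right_mono mat_l1_norm_nonneg) auto
    finally show "mat_l1_norm (?M k * X ^\<^sub>m Suc m')
        \<le> decay_const E (r - r0) j * r ^ m' + r0 * mat_l1_norm (?M k * X ^\<^sub>m m')" .
  qed
qed

lemma mat_pow_uniform_bound:
  assumes r0: "0 \<le> r0" and r: "r0 < r"
  shows "\<exists>C. \<forall>X \<in> carrier_mat n n. mat_l1_norm X \<le> a \<longrightarrow> (\<forall>e\<in>spectrum X. cmod e \<le> r0)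
    \<longrightarrow> (\<forall>m. mat_l1_norm (X ^\<^sub>m m) \<le> C * r ^ m)"
proof (intro exI[of _ "decay_const (real n * (1 + a + real n * r0) ^ n) (r - r0) n"] ballI impI allI)
  fix X :: "complex mat" and m
  assume X: "X \<in> carrier_mat n n" and a: "mat_l1_norm X \<le> a"
    and spec: "\<forall>e\<in>spectrum X. cmod e \<le> r0"
  obtain es where len: "length es = n" and es_spec: "set es \<subseteq> spectrum X"
    and vanish: "lin_factor_prod X es n = 0\<^sub>m n n"
    by (rule cayley_hamilton_factored[OF X])
  have es: "\<forall>e\<in>set es. cmod e \<le> r0"
    using es_spec spec by blast
  have "\<forall>k\<le>n. mat_l1_norm (lin_factor_prod X es k) \<le> real n * (1 + a + real n * r0) ^ n"
  proof (intro allI impI)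
    fix k
    assume k: "k \<le> n"
    have "mat_l1_norm (lin_factor_prod X es k) \<le> real n * (mat_l1_norm X + real n * r0) ^ k"
      using mat_l1_norm_lin_factor_prod[OF X es] k len by simp
    also have "\<dots> \<le> real n * (1 + a + real n * r0) ^ k"
      using a r0 mat_l1_norm_nonneg[of X] by (intro mult_left_mono power_mono) auto
    also have "\<dots> \<le> real n * (1 + a + real n * r0) ^ n"
      using a r0 mat_l1_norm_nonneg[of X] k by (intro mult_left_mono power_increasing) auto
    finally show "mat_l1_norm (lin_factor_prod X es k) \<le> real n * (1 + a + real n * r0) ^ n" .
  qed
  from mat_l1_norm_lin_factor_prod_mult_pow[OF X vanish es len r0 r this, of n 0 m]
  show "mat_l1_norm (X ^\<^sub>m m) \<le> decay_const (real n * (1 + a + real n * r0) ^ n) (r - r0) n * r ^ m"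
    using X by simp
qed

section \<open>Spectral radius of real matrices\<close>

(* Real matrices are transported to the Jordan_Normal_Form library, which supplies the
   spectrum, the Schur decomposition and the factorisation of the characteristic polynomial. *)
definition cart_index :: "nat \<Rightarrow> 'n::finite" where
  "cart_index = (SOME h. bij_betw h {0..<CARD('n)} UNIV)"

lemma bij_cart_index: "bij_betw (cart_index :: nat \<Rightarrow> 'n::finite) {0..<CARD('n)} UNIV"
proof -
  have "\<exists>h. bij_betw h {0..<CARD('n)} (UNIV :: 'n set)"
    using ex_bij_betw_nat_finite[of "UNIV :: 'n set"] by auto
  then show ?thesis
    unfolding cart_index_def by (rule someI_ex)
qed

lemma sum_cart_index: "(\<Sum>k=0..<CARD('n). f (cart_index k)) = (\<Sum>x\<in>UNIV. f (x :: 'n::finite))"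
  by (rule sum.reindex_bij_betw[OF bij_cart_index])

lemma cart_index_inj:
  "i < CARD('n) \<Longrightarrow> j < CARD('n) \<Longrightarrow> (cart_index i :: 'n::finite) = cart_index j \<longleftrightarrow> i = j"
  using bij_cart_index[where 'n='n] unfolding bij_betw_def inj_on_def by auto

lemma cart_index_surj: "\<exists>k < CARD('n). cart_index k = (x :: 'n::finite)"
  using bij_cart_index[where 'n='n] unfolding bij_betw_def by (metis UNIV_I atLeastLessThan_iff imageE)

definition mat_of_cart :: "real^'n^'n \<Rightarrow> complex mat" where
  "mat_of_cart B = Matrix.mat CARD('n) CARD('n) (\<lambda>(i,j). complex_of_real (B $ cart_index i $ cart_index j))"

definition vec_of_cart :: "complex^'n \<Rightarrow> complex vec" where
  "vec_of_cart v = Matrix.vec CARD('n) (\<lambda>k. v $ cart_index k)"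

lemma mat_of_cart_carrier [simp]: "mat_of_cart (B :: real^'n^'n) \<in> carrier_mat CARD('n) CARD('n)"
  unfolding mat_of_cart_def by simp

lemma mat_of_cart_mult: "mat_of_cart (A ** B) = mat_of_cart A * mat_of_cart (B :: real^'n^'n)"
proof (rule eq_matI)
  fix i j
  assume "i < dim_row (mat_of_cart A * mat_of_cart B)" and "j < dim_col (mat_of_cart A * mat_of_cart B)"
  then have i: "i < CARD('n)" and j: "j < CARD('n)"
    by (simp_all add: mat_of_cart_def)
  have "(mat_of_cart A * mat_of_cart B) $$ (i,j)
      = (\<Sum>k=0..<CARD('n). complex_of_real (A $ cart_index i $ cart_index k * B $ cart_index k $ cart_index j))"
    using i j by (simp add: mat_of_cart_def scalar_prod_def)
  also have "\<dots> = (\<Sum>x\<in>UNIV. complex_of_real (A $ cart_index i $ x * B $ x $ cart_index j))"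
    by (rule sum_cart_index)
  also have "\<dots> = mat_of_cart (A ** B) $$ (i,j)"
    using i j by (simp add: mat_of_cart_def matrix_matrix_mult_def)
  finally show "mat_of_cart (A ** B) $$ (i,j) = (mat_of_cart A * mat_of_cart B) $$ (i,j)"
    by simp
qed (simp_all add: mat_of_cart_def)

lemma mat_of_cart_one: "mat_of_cart (mat 1 :: real^'n^'n) = 1\<^sub>m CARD('n)"
  by (rule eq_matI) (auto simp: mat_of_cart_def Finite_Cartesian_Product.mat_def cart_index_inj)

lemma mat_l1_norm_mat_of_cart:
  "mat_l1_norm (mat_of_cart (B :: real^'n^'n)) = (\<Sum>i\<in>UNIV. \<Sum>j\<in>UNIV. \<bar>B $ i $ j\<bar>)"
proof -
  have "mat_l1_norm (mat_of_cart B)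
      = (\<Sum>i=0..<CARD('n). \<Sum>j=0..<CARD('n). \<bar>B $ cart_index i $ cart_index j\<bar>)"
    unfolding mat_l1_norm_def by (simp add: mat_of_cart_def)
  also have "\<dots> = (\<Sum>i\<in>UNIV. \<Sum>j=0..<CARD('n). \<bar>B $ i $ cart_index j\<bar>)"
    by (rule sum_cart_index)
  also have "\<dots> = (\<Sum>i\<in>UNIV. \<Sum>j\<in>UNIV. \<bar>B $ i $ j\<bar>)"
    by (intro sum.cong refl sum_cart_index)
  finally show ?thesis .
qed

lemma mat_of_cart_matpow: "mat_of_cart (matpow (B :: real^'n^'n) m) = mat_of_cart B ^\<^sub>m m"
proof (induction m)
  case 0
  show ?case
    using carrier_matD(1)[OF mat_of_cart_carrier[of B]] by (simp add: mat_of_cart_one)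
next
  case (Suc m)
  then show ?case
    by (simp only: matpow_Suc_right mat_of_cart_mult pow_mat.simps(2))
qed

lemma mat_of_cart_mult_vec:
  "mat_of_cart (B :: real^'n^'n) *\<^sub>v vec_of_cart w = vec_of_cart (cmat B *v w)"
proof (rule eq_vecI)
  fix i
  assume "i < dim_vec (vec_of_cart (cmat B *v w))"
  then have i: "i < CARD('n)"
    by (simp add: vec_of_cart_def)
  then show "vec_index (mat_of_cart B *\<^sub>v vec_of_cart w) i = vec_index (vec_of_cart (cmat B *v w)) i"
    by (simp add: mat_of_cart_def vec_of_cart_def cmat_def matrix_vector_mult_def scalar_prod_def
        sum_cart_index[of "\<lambda>x. complex_of_real (B $ cart_index i $ x) * w $ x"])
qed (simp add: mat_of_cart_def vec_of_cart_def)

lemma vec_of_cart_carrier [simp]: "vec_of_cart (w :: complex^'n) \<in> carrier_vec CARD('n)"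
  unfolding vec_of_cart_def by simp

lemma vec_of_cart_zero: "vec_of_cart (0 :: complex^'n) = 0\<^sub>v CARD('n)"
  unfolding vec_of_cart_def by (rule eq_vecI) simp_all

lemma vec_of_cart_smult: "vec_of_cart (e *s w) = e \<cdot>\<^sub>v vec_of_cart w"
  unfolding vec_of_cart_def by (rule eq_vecI) simp_all

lemma vec_of_cart_inject: "vec_of_cart (v :: complex^'n) = vec_of_cart w \<longleftrightarrow> v = w"
proof
  assume eq: "vec_of_cart v = vec_of_cart w"
  show "v = w"
  proof (rule Finite_Cartesian_Product.vec_eq_iff[THEN iffD2], rule allI)
    fix x :: 'n
    from cart_index_surj[of x] obtain k where k: "k < CARD('n)" "cart_index k = x"
      by blast
    have "vec_index (vec_of_cart v) k = vec_index (vec_of_cart w) k"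
      by (simp only: eq)
    then show "v $ x = w $ x"
      using k by (simp add: vec_of_cart_def)
  qed
next
  show "v = w \<Longrightarrow> vec_of_cart v = vec_of_cart w"
    by (rule arg_cong)
qed

lemma vec_of_cart_onto:
  assumes "u \<in> carrier_vec CARD('n)"
  shows "\<exists>w :: complex^'n. u = vec_of_cart w"
proof
  let ?w = "(\<chi> x. vec_index u (inv_into {0..<CARD('n)} cart_index x)) :: complex^'n"
  have "inv_into {0..<CARD('n)} (cart_index :: nat \<Rightarrow> 'n) (cart_index i) = i" if "i < CARD('n)" for i
    using bij_cart_index[where 'n='n] that by (simp add: bij_betw_def inv_into_f_f)
  then show "u = vec_of_cart ?w"
    using assms unfolding vec_of_cart_def by (intro eq_vecI) auto
qed

lemma ceigenvalues_eq_spectrum: "ceigenvalues (B :: real^'n^'n) = spectrum (mat_of_cart B)"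
proof -
  have "eigenvalue (mat_of_cart B) e \<longleftrightarrow> e \<in> ceigenvalues B" for e
  proof
    assume "eigenvalue (mat_of_cart B) e"
    then obtain u where u: "u \<in> carrier_vec CARD('n)" "u \<noteq> 0\<^sub>v CARD('n)"
      and eig: "mat_of_cart B *\<^sub>v u = e \<cdot>\<^sub>v u"
      using carrier_matD(1)[OF mat_of_cart_carrier[of B]]
      unfolding eigenvalue_def eigenvector_def by auto
    obtain w :: "complex^'n" where w: "u = vec_of_cart w"
      using vec_of_cart_onto[OF u(1)] by blast
    have "w \<noteq> 0"
      using u(2) unfolding w by (auto simp: vec_of_cart_zero)
    moreover have "cmat B *v w = e *s w"
      using eig unfolding w mat_of_cart_mult_vec vec_of_cart_smult[symmetric] vec_of_cart_inject .
    ultimately show "e \<in> ceigenvalues B"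
      unfolding ceigenvalues_def by blast
  next
    assume "e \<in> ceigenvalues B"
    then obtain w where "w \<noteq> 0" and eig: "cmat B *v w = e *s w"
      unfolding ceigenvalues_def by blast
    then have "vec_of_cart w \<noteq> 0\<^sub>v CARD('n)"
      by (simp add: vec_of_cart_zero[symmetric] vec_of_cart_inject)
    moreover have "mat_of_cart B *\<^sub>v vec_of_cart w = e \<cdot>\<^sub>v vec_of_cart w"
      unfolding mat_of_cart_mult_vec eig vec_of_cart_smult ..
    ultimately show "eigenvalue (mat_of_cart B) e"
      using carrier_matD(1)[OF mat_of_cart_carrier[of B]]
      unfolding eigenvalue_def eigenvector_def by (intro exI[of _ "vec_of_cart w"]) simp
  qed
  then show ?thesis
    unfolding spectrum_def by auto
qed

lemma norm_vector_scalar_mult: "norm (z *s v) = cmod z * norm (v :: complex^'n)"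
  by (simp add: norm_vec_def L2_set_def norm_mult power_mult_distrib
      sum_distrib_left[symmetric] real_sqrt_mult)

lemma norm_cart_complex_parts:
  "norm (w :: complex^'n) ^ 2 = norm (\<chi> j. Re (w $ j)) ^ 2 + norm (\<chi> j. Im (w $ j)) ^ 2"
  by (simp add: norm_vec_def L2_set_def sum_nonneg cmod_power2 sum.distrib)

lemma cmod_ceigenvalue_le_mnorm:
  assumes "z \<in> ceigenvalues A"
  shows "cmod z \<le> mnorm A"
proof -
  obtain v where v: "v \<noteq> 0" and eig: "cmat A *v v = z *s v"
    using assms unfolding ceigenvalues_def by auto
  define x where "x = (\<chi> j. Re (v $ j))"
  define y where "y = (\<chi> j. Im (v $ j))"
  have Re: "(\<chi> j. Re ((cmat A *v v) $ j)) = A *v x" and Im: "(\<chi> j. Im ((cmat A *v v) $ j)) = A *v y"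
    by (simp_all add: x_def y_def cmat_def matrix_vector_mult_def Finite_Cartesian_Product.vec_eq_iff
        Re_sum Im_sum)
  have op: "norm (A *v u) \<le> mnorm A * norm u" for u
    unfolding mnorm_def by (rule onorm[OF matrix_vector_mul_bounded_linear])
  have "norm (cmat A *v v) ^ 2 = norm (A *v x) ^ 2 + norm (A *v y) ^ 2"
    using norm_cart_complex_parts[of "cmat A *v v"] unfolding Re Im .
  then have "(cmod z * norm v) ^ 2 = norm (A *v x) ^ 2 + norm (A *v y) ^ 2"
    unfolding eig norm_vector_scalar_mult .
  also have "\<dots> \<le> (mnorm A * norm x) ^ 2 + (mnorm A * norm y) ^ 2"
    by (intro add_mono power_mono op norm_ge_zero)
  also have "\<dots> = (mnorm A * norm v) ^ 2"
    unfolding x_def y_def power_mult_distrib norm_cart_complex_parts[of v] by (simp add: algebra_simps)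
  finally have "cmod z * norm v \<le> mnorm A * norm v"
    by (rule power2_le_imp_le) (simp add: mnorm_def onorm_pos_le[OF matrix_vector_mul_bounded_linear])
  then show ?thesis
    using v by simp
qed

lemma finite_ceigenvalues: "finite (ceigenvalues (B :: real^'n^'n))"
  unfolding ceigenvalues_eq_spectrum by (rule card_finite_spectrum(1)[OF mat_of_cart_carrier])

lemma ceigenvalues_nonempty: "ceigenvalues (B :: real^'n^'n) \<noteq> {}"
  unfolding ceigenvalues_eq_spectrum by (rule spectrum_non_empty[OF mat_of_cart_carrier]) simp

lemma cmod_ceigenvalue_le_spec_rad: "z \<in> ceigenvalues B \<Longrightarrow> cmod z \<le> spec_rad B"
  unfolding spec_rad_def by (rule Max_ge) (simp_all add: finite_ceigenvalues)

lemma spec_rad_nonneg: "0 \<le> spec_rad B"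
  using ceigenvalues_nonempty[of B] cmod_ceigenvalue_le_spec_rad norm_ge_zero order_trans by blast

lemma spec_rad_le_mnorm: "spec_rad B \<le> mnorm B"
  unfolding spec_rad_def using finite_ceigenvalues ceigenvalues_nonempty cmod_ceigenvalue_le_mnorm
  by (subst Max_le_iff) auto

lemma matpow_uniform_bound:
  assumes r0: "0 \<le> r0" and r: "r0 < r"
  shows "\<exists>C\<ge>1. \<forall>B :: real^'n^'n. mnorm B \<le> a \<and> spec_rad B \<le> r0
    \<longrightarrow> (\<forall>m. mnorm (matpow B m) \<le> C * r ^ m)"
proof -
  let ?n = "CARD('n)"
  obtain C where C: "\<forall>X \<in> carrier_mat ?n ?n. mat_l1_norm X \<le> real ?n * real ?n * a
      \<longrightarrow> (\<forall>e\<in>spectrum X. cmod e \<le> r0) \<longrightarrow> (\<forall>m. mat_l1_norm (X ^\<^sub>m m) \<le> C * r ^ m)"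
    using mat_pow_uniform_bound[OF r0 r] by blast
  have "mnorm (matpow B m) \<le> max C 1 * r ^ m"
    if B: "mnorm B \<le> a" "spec_rad B \<le> r0" for B :: "real^'n^'n" and m
  proof -
    have "mat_l1_norm (mat_of_cart B) \<le> (\<Sum>i\<in>(UNIV :: 'n set). \<Sum>j\<in>(UNIV :: 'n set). a)"
      unfolding mat_l1_norm_mat_of_cart using B(1) matrix_component_le_onorm[of B]
      by (intro sum_mono) (auto simp: mnorm_def intro: order_trans)
    then have norm_bound: "mat_l1_norm (mat_of_cart B) \<le> real ?n * real ?n * a"
      by simp
    have spec_bound: "\<forall>e\<in>spectrum (mat_of_cart B). cmod e \<le> r0"
      using B(2) cmod_ceigenvalue_le_spec_rad unfolding ceigenvalues_eq_spectrum by (meson order_trans)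
    have "mnorm (matpow B m) \<le> mat_l1_norm (mat_of_cart (matpow B m))"
      unfolding mnorm_def mat_l1_norm_mat_of_cart by (rule onorm_le_matrix_component_sum)
    also have "\<dots> \<le> C * r ^ m"
      using C norm_bound spec_bound unfolding mat_of_cart_matpow by simp
    also have "\<dots> \<le> max C 1 * r ^ m"
      using r0 r by (intro mult_right_mono) auto
    finally show ?thesis .
  qed
  then show ?thesis
    by (intro exI[of _ "max C 1"]) auto
qed

section \<open>Products of slowly varying matrices\<close>

lemma mnorm_matpow_mult_mprod_le:
  fixes A :: "nat \<Rightarrow> real^'n^'n"
  assumes pow: "\<And>m. mnorm (matpow B m) \<le> C * r ^ m" and r: "0 \<le> r" and \<epsilon>: "0 \<le> \<epsilon>"
    and close: "\<And>j. 1 \<le> j \<Longrightarrow> j \<le> k \<Longrightarrow> mnorm (A (s + j) - B) \<le> \<epsilon>"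
    and shorter: "\<And>i. i < k \<Longrightarrow> mnorm (mprod A s i) \<le> C * (r + C * \<epsilon>) ^ i"
  shows "i \<le> k
    \<Longrightarrow> mnorm (matpow B (k - i) ** mprod A s i) \<le> C * r ^ (k - i) * (r + C * \<epsilon>) ^ i"
proof (induction i)
  case 0
  then show ?case using pow by simp
next
  case (Suc i)
  define q where "q = k - Suc i"
  have q: "k - i = Suc q"
    using Suc.prems unfolding q_def by simp
  let ?D = "A (s + Suc i) - B" and ?r' = "r + C * \<epsilon>"
  have C: "0 \<le> C"
    using order_trans[OF mnorm_nonneg pow[of 0]] by simp
  have split: "matpow B q ** mprod A s (Suc i)
      = matpow B (k - i) ** mprod A s i + matpow B q ** (?D ** mprod A s i)"
    unfolding q mprod.simps by (rule matpow_mult_split)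
  have "mnorm (matpow B q ** (?D ** mprod A s i))
      \<le> mnorm (matpow B q) * (mnorm ?D * mnorm (mprod A s i))"
    by (meson mnorm_mult_le mnorm_nonneg mult_left_mono order_trans)
  also have "\<dots> \<le> C * r ^ q * (\<epsilon> * (C * ?r' ^ i))"
    using C r \<epsilon> close[of "Suc i"] shorter[of i] Suc.prems
    by (intro mult_mono pow mnorm_nonneg mult_nonneg_nonneg) auto
  finally have perturbation:
    "mnorm (matpow B q ** (?D ** mprod A s i)) \<le> C * r ^ q * (\<epsilon> * (C * ?r' ^ i))" .
  have "mnorm (matpow B q ** mprod A s (Suc i))
      \<le> mnorm (matpow B (k - i) ** mprod A s i) + mnorm (matpow B q ** (?D ** mprod A s i))"
    unfolding split by (rule mnorm_triangle)
  also have "\<dots> \<le> C * r ^ (k - i) * ?r' ^ i + C * r ^ q * (\<epsilon> * (C * ?r' ^ i))"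
    using Suc.IH Suc.prems perturbation by (intro add_mono) simp_all
  also have "\<dots> = C * r ^ q * ?r' ^ Suc i"
    unfolding q by (simp add: algebra_simps)
  finally show ?case
    by (simp add: q_def)
qed

lemma mnorm_mprod_perturb:
  fixes A :: "nat \<Rightarrow> real^'n^'n"
  assumes pow: "\<And>m. mnorm (matpow B m) \<le> C * r ^ m" and r: "0 \<le> r" and \<epsilon>: "0 \<le> \<epsilon>"
    and close: "\<And>j. 1 \<le> j \<Longrightarrow> j \<le> k \<Longrightarrow> mnorm (A (s + j) - B) \<le> \<epsilon>"
  shows "mnorm (mprod A s k) \<le> C * (r + C * \<epsilon>) ^ k"
  using close
proof (induction k rule: less_induct)
  case (less k)
  have "mnorm (matpow B (k - k) ** mprod A s k) \<le> C * r ^ (k - k) * (r + C * \<epsilon>) ^ k"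
    using less.IH less.prems by (intro mnorm_matpow_mult_mprod_le[OF pow r \<epsilon>]) auto
  then show ?case
    by simp
qed

lemma pvar_partial_sum_le:
  assumes p: "0 < p" and pv: "pvar p A \<le> ereal V" and \<iota>: "strict_mono \<iota>" "1 \<le> \<iota> 0"
  shows "(\<Sum>k<m. mnorm (A (\<iota> (Suc k)) - A (\<iota> k)) powr p) \<le> V powr p"
proof -
  define S where "S = (SUP \<iota>\<in>{\<iota>. strict_mono \<iota> \<and> \<iota> 0 \<ge> 1}.
       (\<Sum>k. ennreal (mnorm (A (\<iota> (Suc k)) - A (\<iota> k)) powr p)))"
  have pv': "(if S = \<infinity> then \<infinity> else ereal (enn2real S powr (1/p))) \<le> ereal V"
    using pv unfolding pvar_def S_def Let_def by simp
  then have S_fin: "S \<noteq> \<infinity>"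
    by (cases "S = \<infinity>") auto
  with pv' have S_V: "enn2real S powr (1/p) \<le> V"
    by simp
  have "ennreal (\<Sum>k<m. mnorm (A (\<iota> (Suc k)) - A (\<iota> k)) powr p)
      = (\<Sum>k<m. ennreal (mnorm (A (\<iota> (Suc k)) - A (\<iota> k)) powr p))"
    by (simp add: sum_ennreal)
  also have "\<dots> \<le> (\<Sum>k. ennreal (mnorm (A (\<iota> (Suc k)) - A (\<iota> k)) powr p))"
    by (rule sum_le_suminf) auto
  also have "\<dots> \<le> S"
    unfolding S_def by (rule SUP_upper) (use \<iota> in auto)
  finally have "enn2real (ennreal (\<Sum>k<m. mnorm (A (\<iota> (Suc k)) - A (\<iota> k)) powr p)) \<le> enn2real S"
    using S_fin by (intro enn2real_mono) (simp_all add: less_top)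
  then have "(\<Sum>k<m. mnorm (A (\<iota> (Suc k)) - A (\<iota> k)) powr p) \<le> enn2real S"
    by (simp add: sum_nonneg)
  also have "\<dots> = (enn2real S powr (1/p)) powr p"
    using p by (simp add: powr_powr)
  also have "\<dots> \<le> V powr p"
    using p S_V by (intro powr_mono2) auto
  finally show ?thesis .
qed

definition jump_chain ::
  "(nat \<Rightarrow> real^'n^'n) \<Rightarrow> real \<Rightarrow> nat \<Rightarrow> nat \<Rightarrow> nat \<Rightarrow> bool" where
  "jump_chain A \<epsilon> i t m \<longleftrightarrow> (\<exists>c. c 0 = i \<and> c m \<le> t \<and>
      (\<forall>l<m. c l < c (Suc l) \<and> \<epsilon> \<le> mnorm (A (c (Suc l)) - A (c l))))"

lemma jump_chain_0: "i \<le> t \<Longrightarrow> jump_chain A \<epsilon> i t 0"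
  unfolding jump_chain_def by (intro exI[of _ "\<lambda>_. i"]) simp

lemma jump_chain_Cons:
  assumes "jump_chain A \<epsilon> j t m" and "i < j" and "\<epsilon> \<le> mnorm (A j - A i)"
  shows "jump_chain A \<epsilon> i t (Suc m)"
proof -
  obtain c where c: "c 0 = j" "c m \<le> t"
    "\<forall>l<m. c l < c (Suc l) \<and> \<epsilon> \<le> mnorm (A (c (Suc l)) - A (c l))"
    using assms(1) unfolding jump_chain_def by blast
  show ?thesis
    unfolding jump_chain_def
    by (rule exI[of _ "\<lambda>l. if l = 0 then i else c (l - 1)"])
      (use c assms(2,3) in \<open>auto simp: less_Suc_eq_0_disj\<close>)
qed

lemma jump_chain_length_le:
  assumes p: "0 < p" and \<epsilon>: "0 \<le> \<epsilon>" and pv: "pvar p A \<le> ereal V"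
    and chain: "jump_chain A \<epsilon> i t m" and i: "1 \<le> i"
  shows "real m * \<epsilon> powr p \<le> V powr p"
proof -
  obtain c where c: "c 0 = i"
    and jumps: "\<forall>l<m. c l < c (Suc l) \<and> \<epsilon> \<le> mnorm (A (c (Suc l)) - A (c l))"
    using chain unfolding jump_chain_def by blast
  define \<iota> where "\<iota> l = (if l \<le> m then c l else c m + (l - m))" for l
  have "\<iota> l < \<iota> (Suc l)" for l
    using jumps unfolding \<iota>_def by (cases "l < m") auto
  then have "strict_mono \<iota>"
    by (simp add: strict_mono_Suc_iff)
  have "real m * \<epsilon> powr p = (\<Sum>l<m. \<epsilon> powr p)"
    by simp
  also have "\<dots> \<le> (\<Sum>l<m. mnorm (A (\<iota> (Suc l)) - A (\<iota> l)) powr p)"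
    using jumps \<epsilon> p unfolding \<iota>_def by (intro sum_mono powr_mono2) auto
  also have "\<dots> \<le> V powr p"
    using c i by (intro pvar_partial_sum_le[OF p pv \<open>strict_mono \<iota>\<close>]) (simp add: \<iota>_def)
  finally show ?thesis .
qed

lemma exists_first_exceedance:
  fixes d :: "nat \<Rightarrow> real"
  assumes "d i < \<epsilon>" and "i \<le> t" and "\<exists>j\<in>{i..t}. \<epsilon> \<le> d j"
  shows "\<exists>u. i \<le> u \<and> u < t \<and> (\<forall>j\<in>{i..u}. d j < \<epsilon>) \<and> \<epsilon> \<le> d (Suc u)"
  using assms(2,3)
proof (induction t)
  case 0
  then show ?case using assms(1) by auto
next
  case (Suc t)
  show ?case
  proof (cases "\<exists>j\<in>{i..t}. \<epsilon> \<le> d j")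
    case True
    then have "i \<le> t"
      by auto
    from Suc.IH[OF this True] obtain u
      where "i \<le> u" "u < t" "\<forall>j\<in>{i..u}. d j < \<epsilon>" "\<epsilon> \<le> d (Suc u)"
      by blast
    then show ?thesis
      by (intro exI[of _ u]) simp
  next
    case False
    with Suc.prems have "\<epsilon> \<le> d (Suc t)"
      by (auto simp: le_Suc_eq)
    moreover from this assms(1) Suc.prems(1) have "i \<le> t"
      by (auto simp: le_Suc_eq)
    ultimately show ?thesis
      using False by (intro exI[of _ t]) (auto simp: not_le)
  qed
qed

lemma mnorm_mprod_near_constant:
  fixes A :: "nat \<Rightarrow> real^'n^'n"
  assumes pow: "\<And>m. mnorm (matpow (A (Suc s)) m) \<le> C * r ^ m"
    and r: "0 \<le> r" and \<epsilon>: "0 \<le> \<epsilon>" and \<rho>: "r + C * \<epsilon> \<le> \<rho>"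
    and close: "\<forall>j\<in>{Suc s..u}. mnorm (A j - A (Suc s)) \<le> \<epsilon>"
  shows "mnorm (mprod A s (u - s)) \<le> C * \<rho> ^ (u - s)"
proof -
  have C: "0 \<le> C"
    using order_trans[OF mnorm_nonneg pow[of 0]] by simp
  have "mnorm (mprod A s (u - s)) \<le> C * (r + C * \<epsilon>) ^ (u - s)"
    using close by (intro mnorm_mprod_perturb[OF pow r \<epsilon>]) auto
  also have "\<dots> \<le> C * \<rho> ^ (u - s)"
    using C r \<epsilon> \<rho> by (intro mult_left_mono power_mono) auto
  finally show ?thesis .
qed

lemma jump_chain_first_jump:
  assumes st: "s < t" and far: "\<exists>j\<in>{Suc s..t}. \<epsilon> \<le> mnorm (A j - A (Suc s))"
    and no_chain: "\<not> jump_chain A \<epsilon> (Suc s) t (Suc k)" and \<epsilon>: "0 < \<epsilon>"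
  shows "\<exists>u. s < u \<and> u < t \<and> (\<forall>j\<in>{Suc s..u}. mnorm (A j - A (Suc s)) < \<epsilon>)
    \<and> \<not> jump_chain A \<epsilon> (Suc u) t k"
proof -
  have start: "mnorm (A (Suc s) - A (Suc s)) < \<epsilon>"
    using \<epsilon> by simp
  from exists_first_exceedance[where d = "\<lambda>j. mnorm (A j - A (Suc s))", OF start Suc_leI[OF st] far]
  obtain u where u: "Suc s \<le> u" "u < t" "\<forall>j\<in>{Suc s..u}. mnorm (A j - A (Suc s)) < \<epsilon>"
    and jump: "\<epsilon> \<le> mnorm (A (Suc u) - A (Suc s))"
    by blast
  have "\<not> jump_chain A \<epsilon> (Suc u) t k"
  proof
    assume "jump_chain A \<epsilon> (Suc u) t k"
    then have "jump_chain A \<epsilon> (Suc s) t (Suc k)"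
      by (rule jump_chain_Cons) (use u(1) jump in auto)
    with no_chain show False
      by blast
  qed
  with u show ?thesis
    by (intro exI[of _ u]) auto
qed

lemma mnorm_mprod_le_jump_count:
  fixes A :: "nat \<Rightarrow> real^'n^'n"
  assumes pow: "\<And>i m. 1 \<le> i \<Longrightarrow> mnorm (matpow (A i) m) \<le> C * r ^ m"
    and C: "1 \<le> C" and r: "0 \<le> r" and \<epsilon>: "0 < \<epsilon>" and \<rho>: "r + C * \<epsilon> \<le> \<rho>"
  shows "s < t \<Longrightarrow> \<not> jump_chain A \<epsilon> (Suc s) t (Suc k)
    \<Longrightarrow> mnorm (mprod A s (t - s)) \<le> C ^ Suc k * \<rho> ^ (t - s)"
proof -
  have \<rho>_nonneg: "0 \<le> \<rho>"
    using \<rho> C r \<epsilon> mult_nonneg_nonneg[of C \<epsilon>] by linarith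
  have block: "mnorm (mprod A s (u - s)) \<le> C * \<rho> ^ (u - s)"
    if "\<forall>j\<in>{Suc s..u}. mnorm (A j - A (Suc s)) < \<epsilon>" for s u
    using that less_imp_le[OF \<epsilon>]
    by (intro mnorm_mprod_near_constant[OF _ r _ \<rho>] pow) (auto intro: less_imp_le)
  have step: "mnorm (mprod A s (t - s)) \<le> C ^ Suc k * \<rho> ^ (t - s)"
    if st: "s < t" and no_chain: "\<not> jump_chain A \<epsilon> (Suc s) t (Suc k)"
      and rest: "\<And>u. s < u \<Longrightarrow> u < t \<Longrightarrow> \<not> jump_chain A \<epsilon> (Suc u) t k
        \<Longrightarrow> mnorm (mprod A u (t - u)) \<le> C ^ k * \<rho> ^ (t - u)" for s t k
  proof (cases "\<exists>j\<in>{Suc s..t}. \<epsilon> \<le> mnorm (A j - A (Suc s))")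
    case False
    then have "mnorm (mprod A s (t - s)) \<le> C * \<rho> ^ (t - s)"
      by (intro block) (auto simp: not_le)
    also have "\<dots> \<le> C ^ Suc k * \<rho> ^ (t - s)"
      using C \<rho>_nonneg one_le_power[of C k] by (intro mult_right_mono) (simp_all add: mult_le_cancel_left1)
    finally show ?thesis .
  next
    case True
    from jump_chain_first_jump[OF st True no_chain \<epsilon>] obtain u where u: "s < u" "u < t"
      and close: "\<forall>j\<in>{Suc s..u}. mnorm (A j - A (Suc s)) < \<epsilon>"
      and no_chain': "\<not> jump_chain A \<epsilon> (Suc u) t k"
      by blast
    have "mprod A s (t - s) = mprod A u (t - u) ** mprod A s (u - s)"
      using mprod_add[of A s "u - s" "t - u"] u by simp
    then have "mnorm (mprod A s (t - s)) \<le> mnorm (mprod A u (t - u)) * mnorm (mprod A s (u - s))"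
      by (simp add: mnorm_mult_le)
    also have "\<dots> \<le> (C ^ k * \<rho> ^ (t - u)) * (C * \<rho> ^ (u - s))"
      using rest[OF u no_chain'] block[OF close] C \<rho>_nonneg by (intro mult_mono mnorm_nonneg) auto
    also have "\<dots> = C ^ Suc k * \<rho> ^ (t - s)"
      using u by (simp add: power_add[symmetric] mult_ac)
    finally show ?thesis .
  qed
  show "s < t \<Longrightarrow> \<not> jump_chain A \<epsilon> (Suc s) t (Suc k)
    \<Longrightarrow> mnorm (mprod A s (t - s)) \<le> C ^ Suc k * \<rho> ^ (t - s)"
  proof (induction k arbitrary: s)
    case 0
    show ?case
      using step[OF 0] jump_chain_0 by (meson Suc_leI)
  next
    case (Suc k)
    show ?case
      using step[OF Suc.prems Suc.IH] by blast
  qed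
qed

lemma mprod_exponential_bound:
  assumes p: "0 < p" and r0: "0 \<le> r0" and \<rho>: "r0 < \<rho>"
  shows "\<exists>K. \<forall>A :: nat \<Rightarrow> real^'n^'n.
    (\<forall>i\<ge>1. mnorm (A i) \<le> a \<and> spec_rad (A i) \<le> r0) \<and> pvar p A \<le> ereal a
      \<longrightarrow> (\<forall>s t. s < t \<longrightarrow> mnorm (mprod A s (t - s)) \<le> K * \<rho> ^ (t - s))"
proof -
  define r where "r = (r0 + \<rho>) / 2"
  have r: "0 \<le> r" "r0 < r" "r < \<rho>"
    using r0 \<rho> unfolding r_def by auto
  obtain C where C: "1 \<le> C" and pow: "\<forall>B :: real^'n^'n. mnorm B \<le> a \<and> spec_rad B \<le> r0
      \<longrightarrow> (\<forall>m. mnorm (matpow B m) \<le> C * r ^ m)"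
    using matpow_uniform_bound[OF r0 r(2)] by blast
  define \<epsilon> where "\<epsilon> = (\<rho> - r) / C"
  have \<epsilon>: "0 < \<epsilon>" "r + C * \<epsilon> \<le> \<rho>"
    using C r unfolding \<epsilon>_def by auto
  define k where "k = nat \<lceil>a powr p / \<epsilon> powr p\<rceil>"
  show ?thesis
  proof (intro exI[of _ "C ^ Suc k"] allI impI)
    fix A :: "nat \<Rightarrow> real^'n^'n" and s t :: nat
    assume hyp: "(\<forall>i\<ge>1. mnorm (A i) \<le> a \<and> spec_rad (A i) \<le> r0) \<and> pvar p A \<le> ereal a"
      and st: "s < t"
    have no_chain: "\<not> jump_chain A \<epsilon> (Suc s) t (Suc k)"
    proof
      assume "jump_chain A \<epsilon> (Suc s) t (Suc k)"
      from jump_chain_length_le[OF p _ _ this] hyp \<epsilon>(1)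
      have "real (Suc k) * \<epsilon> powr p \<le> a powr p"
        by simp
      moreover have "a powr p / \<epsilon> powr p \<le> real k"
        unfolding k_def by (rule real_nat_ceiling_ge)
      then have "a powr p \<le> real k * \<epsilon> powr p"
        using \<epsilon>(1) by (simp add: divide_le_eq)
      moreover have "0 < \<epsilon> powr p"
        using \<epsilon>(1) by simp
      ultimately show False
        by (simp add: algebra_simps)
    qed
    show "mnorm (mprod A s (t - s)) \<le> C ^ Suc k * \<rho> ^ (t - s)"
      by (rule mnorm_mprod_le_jump_count[OF _ C r(1) \<epsilon> st no_chain]) (use pow hyp in auto)
  qed
qed

lemma spec_rad_le_SUP:
  assumes "\<forall>i\<ge>1. mnorm (A i) \<le> a" and "1 \<le> i"
  shows "spec_rad (A i) \<le> (SUP i\<in>{1..}. spec_rad (A i))"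
proof (rule cSUP_upper)
  show "bdd_above ((\<lambda>i. spec_rad (A i)) ` {1..})"
    using assms(1) by (intro bdd_aboveI2[of _ _ a]) (auto intro: order_trans[OF spec_rad_le_mnorm])
qed (use assms(2) in simp)

theorem lemmaC8:
  fixes p Astar rho0 rho :: real
  assumes "p \<ge> 1" and "rho0 < 1" and "rho > rho0"
  shows "\<exists>K. \<forall>A :: nat \<Rightarrow> real^'n^'n.
           (\<forall>i\<ge>1. mnorm (A i) \<le> Astar) \<and>
           (SUP i\<in>{1..}. spec_rad (A i)) = rho0 \<and>
           pvar p A \<le> ereal Astar
           \<longrightarrow> (\<forall>s t :: nat. s < t \<longrightarrow> mnorm (mprod A s (t - s)) \<le> K * rho ^ (t - s))"
proof (cases "0 < rho")
  case True
  then obtain K where K: "\<forall>A :: nat \<Rightarrow> real^'n^'n.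
      (\<forall>i\<ge>1. mnorm (A i) \<le> Astar \<and> spec_rad (A i) \<le> max rho0 0) \<and> pvar p A \<le> ereal Astar
      \<longrightarrow> (\<forall>s t. s < t \<longrightarrow> mnorm (mprod A s (t - s)) \<le> K * rho ^ (t - s))"
    using mprod_exponential_bound[of p "max rho0 0" rho Astar] assms by auto
  have "spec_rad (A i) \<le> max rho0 0"
    if "\<forall>i\<ge>1. mnorm (A i) \<le> Astar" and "(SUP i\<in>{1..}. spec_rad (A i)) = rho0" and "1 \<le> i"
    for A :: "nat \<Rightarrow> real^'n^'n" and i
    using spec_rad_le_SUP[OF that(1,3)] that(2) by simp
  with K show ?thesis
    by (intro exI[of _ K]) blast
next
  case False
  show ?thesis
  proof (intro exI[of _ 0] allI impI)
    fix A :: "nat \<Rightarrow> real^'n^'n" and s t :: nat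
    assume "(\<forall>i\<ge>1. mnorm (A i) \<le> Astar) \<and> (SUP i\<in>{1..}. spec_rad (A i)) = rho0
      \<and> pvar p A \<le> ereal Astar"
    then have "spec_rad (A 1) \<le> rho0"
      using spec_rad_le_SUP[of A Astar 1] by simp
    with spec_rad_nonneg[of "A 1"] False assms(3)
    show "mnorm (mprod A s (t - s)) \<le> 0 * rho ^ (t - s)"
      by linarith
  qed
qed

end
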